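(* Let $d\ge 3$, let $\Delta$ be a simplicial $(d-1)$-sphere with facet-ridge graph $G$, $|V(G)|=n$, and let $\mathcal{O}$ be a good acyclic orientation of $G$. Let $t_1$ be the unique sink of $G$ with respect to $\mathcal{O}$, and for $2\le i\le n$ recursively let $t_i$ be any sink of the induced subgraph $G[V(G)\setminus\{t_1,\dots,t_{i-1}\}]$ (with the induced orientation). Let $T_i$ be the facet of $\Delta$ corresponding to $t_i$. Then $T_1,\dots,T_n$ is a shelling of $\Delta$.
   Context: $\Delta$ is a simplicial complex whose geometric realization is homeomorphic to the $(d-1)$-sphere; facets are its maximal faces ($d$ elements), ridges are faces with $d-1$ elements. The facet-ridge graph $G$ has the facets as vertices, two adjacent iff they share a ridge; vertex $t$ of $G$ corresponds to facet $T$. Shelling: a total ordering $T_1,\dots,T_n$ of the facets such that for each $2\le i\le n$, $\overline{T}_i\cap(\overline{T}_1\cup\cdots\cup\overline{T}_{i-1})$ is a pure $(d-2)$-dimensional simplicial complex, where $\overline{T}$ is the set of all subsets of $T$. For $0\le k\le d$ and a face $\sigma$ with $|\sigma|=d-k$, $\mathcal{V}^\Delta_k(\sigma)$ is the set of vertices of $G$ corresponding to facets containing $\sigma$. An orientation $\mathcal{O}$ of $G$ is good if for every such $k$ and $\sigma$ the induced orientation on $G[\mathcal{V}^\Delta_k(\sigma)]$ has exactly one sink (in particular, taking $\sigma=\emptyset$, $G$ has exactly one sink); acyclic means no directed cycle. *)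

theory Defs
  imports "HOL-Analysis.Analysis"
begin

definition simplicial_complex :: "'a set set \<Rightarrow> bool" where
  "simplicial_complex \<Delta> \<longleftrightarrow> finite \<Delta> \<and> \<Delta> \<noteq> {} \<and> (\<forall>F\<in>\<Delta>. finite F) \<and>
     (\<forall>F\<in>\<Delta>. \<forall>G. G \<subseteq> F \<longrightarrow> G \<in> \<Delta>)"

text \<open>Geometric realization: points are barycentric-coordinate functions whose support is a face.\<close>
definition geom_realization :: "'a set set \<Rightarrow> ('a \<Rightarrow> real) set" where
  "geom_realization \<Delta> = {x. (\<forall>v. 0 \<le> x v) \<and> {v. x v \<noteq> 0} \<in> \<Delta> \<and> sum x {v. x v \<noteq> 0} = 1}"

definition realization_top :: "'a set set \<Rightarrow> ('a \<Rightarrow> real) topology" where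
  "realization_top \<Delta> = subtopology (powertop_real UNIV) (geom_realization \<Delta>)"

definition simplicial_sphere :: "'a set set \<Rightarrow> nat \<Rightarrow> bool" where
  "simplicial_sphere \<Delta> d \<longleftrightarrow> simplicial_complex \<Delta> \<and> d \<ge> 1 \<and>
     realization_top \<Delta> homeomorphic_space nsphere (d - 1)"

definition facets :: "'a set set \<Rightarrow> 'a set set" where
  "facets \<Delta> = {F\<in>\<Delta>. \<forall>G\<in>\<Delta>. F \<subseteq> G \<longrightarrow> G = F}"

definition fr_adj :: "'a set set \<Rightarrow> nat \<Rightarrow> 'a set \<Rightarrow> 'a set \<Rightarrow> bool" where
  "fr_adj \<Delta> d F G \<longleftrightarrow> F \<in> facets \<Delta> \<and> G \<in> facets \<Delta> \<and> F \<noteq> G \<and>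
     (\<exists>R\<in>\<Delta>. card R = d - 1 \<and> R \<subseteq> F \<and> R \<subseteq> G)"

definition fr_orientation :: "'a set set \<Rightarrow> nat \<Rightarrow> ('a set \<times> 'a set) set \<Rightarrow> bool" where
  "fr_orientation \<Delta> d Ori \<longleftrightarrow> (\<forall>(F,G)\<in>Ori. fr_adj \<Delta> d F G) \<and>
     (\<forall>F G. fr_adj \<Delta> d F G \<longrightarrow> ((F,G) \<in> Ori \<longleftrightarrow> (G,F) \<notin> Ori))"

definition is_sink :: "('a set \<times> 'a set) set \<Rightarrow> 'a set set \<Rightarrow> 'a set \<Rightarrow> bool" where
  "is_sink Ori W t \<longleftrightarrow> t \<in> W \<and> (\<forall>u\<in>W. (t,u) \<notin> Ori)"

definition Vk :: "'a set set \<Rightarrow> 'a set \<Rightarrow> 'a set set" where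
  "Vk \<Delta> \<sigma> = {F\<in>facets \<Delta>. \<sigma> \<subseteq> F}"

definition good_orientation :: "'a set set \<Rightarrow> nat \<Rightarrow> ('a set \<times> 'a set) set \<Rightarrow> bool" where
  "good_orientation \<Delta> d Ori \<longleftrightarrow> fr_orientation \<Delta> d Ori \<and>
     (\<forall>k\<le>d. \<forall>\<sigma>\<in>\<Delta>. card \<sigma> = d - k \<longrightarrow> (\<exists>!t. is_sink Ori (Vk \<Delta> \<sigma>) t))"

definition pure_dim :: "'a set set \<Rightarrow> nat \<Rightarrow> bool" where
  "pure_dim K m \<longleftrightarrow> (\<forall>F\<in>K. \<exists>G\<in>K. F \<subseteq> G \<and> card G = m + 1) \<and> (\<forall>G\<in>K. card G \<le> m + 1)"

definition is_shelling :: "'a set set \<Rightarrow> nat \<Rightarrow> (nat \<Rightarrow> 'a set) \<Rightarrow> nat \<Rightarrow> bool" where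
  "is_shelling \<Delta> d T n \<longleftrightarrow> bij_betw T {1..n} (facets \<Delta>) \<and>
     (\<forall>i\<in>{2..n}. pure_dim (Pow (T i) \<inter> (\<Union>j\<in>{1..<i}. Pow (T j))) (d - 2))"

end

theory Submission
  imports Defs
begin

text \<open>Let \<open>j < i\<close> and \<open>\<sigma> = T\<^sub>i \<inter> T\<^sub>j\<close>. Among the facets containing \<open>\<sigma>\<close>, the one removed first
  is a sink of the subgraph they induce, because all the others were still present when it
  was removed. A good orientation has only one such sink, so \<open>T\<^sub>i\<close> is not a sink there and
  has an out-neighbour \<open>U \<supseteq> \<sigma>\<close>. Since \<open>T\<^sub>i\<close> was a sink of what remained at step \<open>i\<close>, the facet
  \<open>U\<close> was removed earlier, and \<open>T\<^sub>i \<inter> U\<close> is a ridge containing \<open>\<sigma>\<close>. Hence every face of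
  \<open>T\<^sub>i\<close> lying in an earlier facet lies in a ridge of \<open>T\<^sub>i\<close> lying in an earlier facet, which is
  exactly the purity required of a shelling.\<close>

definition sink_sequence :: "('a set \<times> 'a set) set \<Rightarrow> 'a set set \<Rightarrow> (nat \<Rightarrow> 'a set) \<Rightarrow> nat \<Rightarrow> bool"
  where "sink_sequence Ori W t n \<longleftrightarrow> (\<forall>i\<in>{1..n}. is_sink Ori (W - t ` {1..<i}) (t i))"

lemma sink_sequence_mem:
  assumes "sink_sequence Ori W t n" "i \<in> {1..n}"
  shows "t i \<in> W"
  using assms by (auto simp: sink_sequence_def is_sink_def)

lemma sink_sequence_out_arc:
  assumes "sink_sequence Ori W t n" "i \<in> {1..n}" "(t i, u) \<in> Ori" "u \<in> W"
  shows "u \<in> t ` {1..<i}"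
  using assms by (auto simp: sink_sequence_def is_sink_def)

lemma sink_sequence_distinct:
  assumes "sink_sequence Ori W t n" "i \<in> {1..n}" "j \<in> {1..<i}"
  shows "t i \<noteq> t j"
proof -
  have "t i \<in> W - t ` {1..<i}"
    using assms(1,2) by (simp add: sink_sequence_def is_sink_def)
  with assms(3) show ?thesis by blast
qed

lemma sink_sequence_inj_on:
  assumes "sink_sequence Ori W t n"
  shows "inj_on t {1..n}"
proof (rule inj_onI)
  fix i j assume "i \<in> {1..n}" "j \<in> {1..n}" "t i = t j"
  then show "i = j"
    using sink_sequence_distinct[OF assms, of i j] sink_sequence_distinct[OF assms, of j i]
    by (metis atLeastAtMost_iff atLeastLessThan_iff linorder_neqE_nat)
qed

lemma sink_sequence_bij_betw:
  assumes "sink_sequence Ori W t n" "finite W" "n = card W"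
  shows "bij_betw t {1..n} W"
proof -
  have inj: "inj_on t {1..n}" using assms(1) by (rule sink_sequence_inj_on)
  moreover have "t ` {1..n} \<subseteq> W" using sink_sequence_mem[OF assms(1)] by blast
  moreover have "card (t ` {1..n}) = card W" using card_image[OF inj] assms(3) by simp
  ultimately show ?thesis using assms(2) by (simp add: bij_betw_def card_subset_eq)
qed

lemma sink_sequence_first_is_sink:
  assumes "sink_sequence Ori W t n" "V \<subseteq> W" "j \<in> {1..n}" "t j \<in> V"
  obtains m where "m \<in> {1..j}" "is_sink Ori V (t m)"
proof -
  define m where "m = Min {l \<in> {1..n}. t l \<in> V}"
  have "m \<in> {l \<in> {1..n}. t l \<in> V}"
    unfolding m_def using assms(3,4) by (intro Min_in) auto
  moreover have "m \<le> j" unfolding m_def using assms(3,4) by (intro Min_le) auto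
  ultimately have m: "m \<in> {1..n}" "t m \<in> V" "m \<le> j" by auto
  have "V \<subseteq> W - t ` {1..<m}"
  proof
    fix v assume "v \<in> V"
    moreover have "v \<notin> t ` {1..<m}"
    proof
      assume "v \<in> t ` {1..<m}"
      then obtain l where l: "l \<in> {1..<m}" "v = t l" by blast
      with \<open>v \<in> V\<close> m(1) have "m \<le> l" unfolding m_def by (intro Min_le) auto
      with l(1) show False by simp
    qed
    ultimately show "v \<in> W - t ` {1..<m}" using assms(2) by blast
  qed
  then have "is_sink Ori V (t m)"
    using assms(1) m(1,2) by (auto simp: sink_sequence_def is_sink_def)
  with m show thesis by (intro that) auto
qed

lemma sink_sequence_later_has_earlier_out_arc:
  assumes seq: "sink_sequence Ori W t n" and "V \<subseteq> W" and unique: "\<exists>!s. is_sink Ori V s"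
    and i: "i \<in> {1..n}" and j: "j \<in> {1..<i}" and "t i \<in> V" "t j \<in> V"
  obtains l where "l \<in> {1..<i}" "t l \<in> V" "(t i, t l) \<in> Ori"
proof -
  obtain m where m: "m \<in> {1..j}" "is_sink Ori V (t m)"
    using sink_sequence_first_is_sink[OF seq \<open>V \<subseteq> W\<close>, of j] i j \<open>t j \<in> V\<close> by auto
  have "\<not> is_sink Ori V (t i)"
  proof
    assume "is_sink Ori V (t i)"
    with m(2) unique have "t i = t m" by blast
    with sink_sequence_distinct[OF seq i, of m] m(1) j show False by auto
  qed
  then obtain u where "u \<in> V" "(t i, u) \<in> Ori"
    using \<open>t i \<in> V\<close> by (auto simp: is_sink_def)
  moreover from this obtain l where "l \<in> {1..<i}" "u = t l"
    using sink_sequence_out_arc[OF seq i] \<open>V \<subseteq> W\<close> by blast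
  ultimately show thesis using that by blast
qed

lemma finite_facet:
  assumes "simplicial_complex \<Delta>" "F \<in> facets \<Delta>"
  shows "finite F"
  using assms by (simp add: simplicial_complex_def facets_def)

lemma card_Int_facets_less:
  assumes "simplicial_complex \<Delta>" "\<forall>F\<in>facets \<Delta>. card F = d"
    and "F \<in> facets \<Delta>" "G \<in> facets \<Delta>" "F \<noteq> G"
  shows "card (F \<inter> G) < d"
proof -
  have "finite F" "finite G" using assms finite_facet by blast+
  moreover have "card F = d" "card G = d" using assms by blast+
  ultimately have "F \<inter> G \<subset> F"
    using \<open>F \<noteq> G\<close> by (metis Int_lower1 Int_lower2 card_subset_eq inf.order_iff psubsetI)
  then show ?thesis using psubset_card_mono \<open>finite F\<close> \<open>card F = d\<close> by blast
qed

lemma fr_adj_card_Int: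
  assumes "simplicial_complex \<Delta>" "\<forall>F\<in>facets \<Delta>. card F = d" "fr_adj \<Delta> d F G"
  shows "card (F \<inter> G) = d - 1"
proof -
  obtain R where R: "card R = d - 1" "R \<subseteq> F \<inter> G"
    using assms(3) by (auto simp: fr_adj_def)
  have "F \<in> facets \<Delta>" "G \<in> facets \<Delta>" "F \<noteq> G" using assms(3) by (auto simp: fr_adj_def)
  then have "finite F" "card (F \<inter> G) < d"
    using assms(1,2) finite_facet card_Int_facets_less by blast+
  moreover have "card R \<le> card (F \<inter> G)" using R(2) \<open>finite F\<close> by (simp add: card_mono)
  ultimately show ?thesis using R(1) by linarith
qed

lemma good_orientation_unique_sink:
  assumes "good_orientation \<Delta> d Ori" "\<sigma> \<in> \<Delta>" "card \<sigma> \<le> d"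
  shows "\<exists>!s. is_sink Ori (Vk \<Delta> \<sigma>) s"
  using assms unfolding good_orientation_def by (metis diff_diff_cancel diff_le_self)

lemma good_orientation_arc_adj:
  "good_orientation \<Delta> d Ori \<Longrightarrow> (F, G) \<in> Ori \<Longrightarrow> fr_adj \<Delta> d F G"
  by (auto simp: good_orientation_def fr_orientation_def)

lemma good_sink_sequence_ridge_with_earlier_facet:
  assumes cx: "simplicial_complex \<Delta>" and pure: "\<forall>F\<in>facets \<Delta>. card F = d"
    and good: "good_orientation \<Delta> d Ori" and seq: "sink_sequence Ori (facets \<Delta>) t n"
    and i: "i \<in> {1..n}" and j: "j \<in> {1..<i}"
  obtains l where "l \<in> {1..<i}" "t i \<inter> t j \<subseteq> t l" "card (t i \<inter> t l) = d - 1"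
proof -
  define \<sigma> where "\<sigma> = t i \<inter> t j"
  have ti: "t i \<in> facets \<Delta>" and tj: "t j \<in> facets \<Delta>"
    using sink_sequence_mem[OF seq] i j by auto
  have "\<sigma> \<in> \<Delta>"
    using cx ti by (auto simp: simplicial_complex_def facets_def \<sigma>_def)
  moreover have "card \<sigma> \<le> d"
    using card_mono[OF finite_facet[OF cx ti]] pure ti by (auto simp: \<sigma>_def)
  ultimately have "\<exists>!s. is_sink Ori (Vk \<Delta> \<sigma>) s"
    using good_orientation_unique_sink[OF good] by blast
  moreover have "Vk \<Delta> \<sigma> \<subseteq> facets \<Delta>" "t i \<in> Vk \<Delta> \<sigma>" "t j \<in> Vk \<Delta> \<sigma>"
    using ti tj by (auto simp: Vk_def \<sigma>_def)
  ultimately obtain l where l: "l \<in> {1..<i}" "t l \<in> Vk \<Delta> \<sigma>" "(t i, t l) \<in> Ori"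
    using sink_sequence_later_has_earlier_out_arc[OF seq _ _ i j] by metis
  have "card (t i \<inter> t l) = d - 1"
    using fr_adj_card_Int[OF cx pure good_orientation_arc_adj[OF good l(3)]] .
  with l show thesis using that by (auto simp: Vk_def \<sigma>_def)
qed

lemma pure_dim_Pow_Int_Union_Pow:
  assumes "finite T"
    and ridge: "\<And>F. F \<in> \<F> \<Longrightarrow> \<exists>G\<in>\<F>. T \<inter> F \<subseteq> G \<and> card (T \<inter> G) = m + 1"
    and bound: "\<And>F. F \<in> \<F> \<Longrightarrow> card (T \<inter> F) \<le> m + 1"
  shows "pure_dim (Pow T \<inter> \<Union>(Pow ` \<F>)) m"
  unfolding pure_dim_def
proof (intro conjI ballI)
  fix X assume "X \<in> Pow T \<inter> \<Union>(Pow ` \<F>)"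
  then obtain F where "F \<in> \<F>" "X \<subseteq> T \<inter> F" by auto
  with ridge obtain G where "G \<in> \<F>" "X \<subseteq> T \<inter> G" "card (T \<inter> G) = m + 1" by blast
  then show "\<exists>G\<in>Pow T \<inter> \<Union>(Pow ` \<F>). X \<subseteq> G \<and> card G = m + 1" by blast
next
  fix X assume "X \<in> Pow T \<inter> \<Union>(Pow ` \<F>)"
  then obtain F where "F \<in> \<F>" "X \<subseteq> T \<inter> F" by auto
  then show "card X \<le> m + 1" using bound card_mono[of "T \<inter> F" X] \<open>finite T\<close> by force
qed

theorem good_sink_sequence_is_shelling:
  assumes cx: "simplicial_complex \<Delta>" and "d \<ge> 2" and pure: "\<forall>F\<in>facets \<Delta>. card F = d"
    and good: "good_orientation \<Delta> d Ori" and seq: "sink_sequence Ori (facets \<Delta>) t n"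
    and n: "n = card (facets \<Delta>)"
  shows "is_shelling \<Delta> d t n"
  unfolding is_shelling_def
proof (intro conjI ballI)
  have "finite (facets \<Delta>)" using cx by (simp add: simplicial_complex_def facets_def)
  then show "bij_betw t {1..n} (facets \<Delta>)" using sink_sequence_bij_betw[OF seq _ n] by blast
next
  fix i assume "i \<in> {2..n}"
  then have i: "i \<in> {1..n}" by simp
  have ti: "t i \<in> facets \<Delta>" using sink_sequence_mem[OF seq i] .
  have "pure_dim (Pow (t i) \<inter> \<Union>(Pow ` t ` {1..<i})) (d - 2)"
  proof (rule pure_dim_Pow_Int_Union_Pow[OF finite_facet[OF cx ti]])
    fix F assume "F \<in> t ` {1..<i}"
    then obtain j where j: "j \<in> {1..<i}" and F: "F = t j" by blast
    obtain l where "l \<in> {1..<i}" "t i \<inter> t j \<subseteq> t l" "card (t i \<inter> t l) = d - 1"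
      using good_sink_sequence_ridge_with_earlier_facet[OF cx pure good seq i j] .
    then show "\<exists>G\<in>t ` {1..<i}. t i \<inter> F \<subseteq> G \<and> card (t i \<inter> G) = d - 2 + 1"
      using F \<open>d \<ge> 2\<close> by auto
    have "t j \<in> facets \<Delta>" using sink_sequence_mem[OF seq] i j by simp
    then show "card (t i \<inter> F) \<le> d - 2 + 1"
      using card_Int_facets_less[OF cx pure ti] sink_sequence_distinct[OF seq i j] F \<open>d \<ge> 2\<close>
      by fastforce
  qed
  then show "pure_dim (Pow (t i) \<inter> (\<Union>j\<in>{1..<i}. Pow (t j))) (d - 2)"
    by (simp add: image_comp)
qed

theorem proposition3p2:
  fixes \<Delta> :: "'a set set" and d n :: nat
    and Ori :: "('a set \<times> 'a set) set" and t :: "nat \<Rightarrow> 'a set"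
  assumes "d \<ge> 3"
    and "simplicial_sphere \<Delta> d"
    and "\<forall>F\<in>facets \<Delta>. card F = d"
    and "n = card (facets \<Delta>)"
    and "good_orientation \<Delta> d Ori"
    and "acyclic Ori"
    and "\<forall>i\<in>{1..n}. is_sink Ori (facets \<Delta> - t ` {1..<i}) (t i)"
  shows "is_shelling \<Delta> d t n"
proof (rule good_sink_sequence_is_shelling)
  show "simplicial_complex \<Delta>" using assms(2) by (simp add: simplicial_sphere_def)
  show "sink_sequence Ori (facets \<Delta>) t n" using assms(7) by (simp add: sink_sequence_def)
qed (use assms in auto)

end
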